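(* For $\alpha\in\mathbb N$ and $n\ge 0$, $$\det\left(1/F_{\alpha+i+j}\right)_{0\le i,j\le n}=\left((-1)^{\alpha\binom{n+1}{2}}F_\alpha\prod_{k=1}^nF_{\alpha+2k}\binom{\alpha+2k-1}{k}_{\mathbb F}^2\right)^{-1},$$ which is the reciprocal of an integer.
   Context: $F_n$ are the Fibonacci numbers ($F_0=0,F_1=1,F_{n+1}=F_n+F_{n-1}$). The Fibonomial coefficients are $\binom{n}{k}_{\mathbb F}=\prod_{i=1}^k F_{n-i+1}/F_i$ for $0\le k\le n$ (empty product $=1$). *)

theory Defs
  imports "HOL-Number_Theory.Fib" "Jordan_Normal_Form.Determinant"
begin

definition fibonomial :: "nat \<Rightarrow> nat \<Rightarrow> real" where
  "fibonomial n k = (\<Prod>i=1..k. real (fib (n - i + 1)) / real (fib i))"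

end

theory Submission
  imports Defs
begin

text \<open>
  By Binet's formula, with \<open>\<phi>\<psi> = -1\<close>, the nodes \<open>x\<^sub>i = \<phi>\<^bsup>\<alpha>+i\<^esup>/\<psi>\<^sup>i\<close> and
  \<open>y\<^sub>j = \<psi>\<^bsup>\<alpha>+j\<^esup>/\<phi>\<^sup>j\<close> satisfy \<open>x\<^sub>i - y\<^sub>j = \<surd>5 F\<^bsub>\<alpha>+i+j\<^esub> / (\<phi>\<^sup>j \<psi>\<^sup>i)\<close>, so the
  matrix \<open>(1/F\<^bsub>\<alpha>+i+j\<^esub>)\<close> is a Cauchy matrix \<open>(1/(x\<^sub>i - y\<^sub>j))\<close> with rescaled rows
  and columns. Cauchy's determinant, in the form of the ratio of consecutive leading minors,
  then gives a product whose factors are again differences of nodes, i.e. Fibonacci numbers: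
  the \<open>N\<close>-th ratio is \<open>(-1)\<^bsup>\<alpha>N\<^esup> / (F\<^bsub>\<alpha>+2N\<^esub> \<cdot> binom(\<alpha>+2N-1, N)\<^sub>F\<^sup>2)\<close>.
  The denominator is an integer since Fibonomial coefficients satisfy a Pascal-type recurrence
  with Fibonacci coefficients.
\<close>

lemma det_mat_scale_rows_cols:
  fixes a b :: "nat \<Rightarrow> 'a::comm_ring_1"
  shows "det (mat n n (\<lambda>(i, j). a i * b j * f i j))
       = (\<Prod>i<n. a i) * (\<Prod>j<n. b j) * det (mat n n (\<lambda>(i, j). f i j))"
proof -
  have "(\<Prod>i = 0..<n. mat n n (\<lambda>(i, j). a i * b j * f i j) $$ (i, p i))
      = (\<Prod>i<n. a i) * (\<Prod>j<n. b j) * (\<Prod>i = 0..<n. mat n n (\<lambda>(i, j). f i j) $$ (i, p i))"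
    if p: "p permutes {0..<n}" for p
  proof -
    have p_less: "i < n \<Longrightarrow> p i < n" for i
      using permutes_in_image[OF p] by simp
    have "(\<Prod>i = 0..<n. mat n n (\<lambda>(i, j). a i * b j * f i j) $$ (i, p i))
        = (\<Prod>i = 0..<n. a i) * (\<Prod>i = 0..<n. b (p i)) * (\<Prod>i = 0..<n. f i (p i))"
      by (simp add: p_less prod.distrib)
    also have "(\<Prod>i = 0..<n. b (p i)) = (\<Prod>j<n. b j)"
      using prod.permute[OF p, of b] by (simp add: atLeast0LessThan)
    finally show ?thesis
      by (simp add: p_less atLeast0LessThan)
  qed
  then show ?thesis
    unfolding det_def'[OF mat_carrier] sum_distrib_left by (intro sum.cong) (simp_all add: mult_ac)
qed

lemma det_mat_add_last_row:
  fixes f :: "nat \<Rightarrow> nat \<Rightarrow> 'a::comm_ring_1"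
  shows "det (mat (Suc N) (Suc N) (\<lambda>(i, j). if i < N then f i j + c i * f N j else f i j))
       = det (mat (Suc N) (Suc N) (\<lambda>(i, j). f i j))"
proof -
  let ?L = "mat (Suc N) (Suc N) (\<lambda>(i, j). if i = j then 1 else if j = N then c i else 0)"
  let ?A = "mat (Suc N) (Suc N) (\<lambda>(i, j). f i j)"
  have "(\<Sum>k<Suc N. (if i = k then 1 else if k = N then c i else 0) * f k j)
      = (if i < N then f i j + c i * f N j else f i j)" if "i < Suc N" for i j
  proof -
    have "(\<Sum>k<N. (if i = k then 1 else if k = N then c i else 0) * f k j)
        = (\<Sum>k<N. if k = i then f i j else 0)"
      by (intro sum.cong) auto
    then show ?thesis
      using that by (auto simp: lessThan_Suc less_Suc_eq)
  qed
  then have "mat (Suc N) (Suc N) (\<lambda>(i, j). if i < N then f i j + c i * f N j else f i j) = ?L * ?A"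
    by (intro eq_matI) (auto simp: scalar_prod_def atLeast0LessThan)
  moreover have "det ?L = 1"
    by (subst det_upper_triangular[of _ "Suc N"]) (auto simp: upper_triangular_def prod_list_diag_prod)
  ultimately show ?thesis
    by (simp add: det_mult[of _ "Suc N"])
qed

lemma det_mat_add_last_col:
  fixes f :: "nat \<Rightarrow> nat \<Rightarrow> 'a::comm_ring_1"
  shows "det (mat (Suc N) (Suc N) (\<lambda>(i, j). if j < N then f i j + c j * f i N else f i j))
       = det (mat (Suc N) (Suc N) (\<lambda>(i, j). f i j))"
proof -
  have transpose: "det (mat n n (\<lambda>(i, j). g i j)) = det (mat n n (\<lambda>(i, j). g j i))" for n g
  proof -
    have "transpose_mat (mat n n (\<lambda>(i, j). g i j)) = mat n n (\<lambda>(i, j). g j i)"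
      by (intro eq_matI) auto
    then show ?thesis
      using det_transpose[of "mat n n (\<lambda>(i, j). g i j)" n] by simp
  qed
  show ?thesis
    using det_mat_add_last_row[of N "\<lambda>i j. f j i" c]
    by (simp add: transpose[of _ f] transpose[of _ "\<lambda>i j. if j < N then f i j + c j * f i N else f i j"])
qed

lemma det_mat_last_row_unit:
  fixes f :: "nat \<Rightarrow> nat \<Rightarrow> 'a::comm_ring_1"
  assumes "\<And>j. j < N \<Longrightarrow> f N j = 0" and "f N N = 1"
  shows "det (mat (Suc N) (Suc N) (\<lambda>(i, j). f i j)) = det (mat N N (\<lambda>(i, j). f i j))"
proof -
  let ?A = "mat (Suc N) (Suc N) (\<lambda>(i, j). f i j)"
  have "det ?A = (\<Sum>j<Suc N. ?A $$ (N, j) * cofactor ?A N j)"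
    by (rule laplace_expansion_row) auto
  also have "\<dots> = det (mat_delete ?A N N)"
    using assms by (simp add: lessThan_Suc cofactor_def)
  also have "mat_delete ?A N N = mat N N (\<lambda>(i, j). f i j)"
    by (intro eq_matI) (auto simp: mat_delete_def)
  finally show ?thesis .
qed

lemma det_cauchy_Suc:
  fixes x y :: "nat \<Rightarrow> 'a::field"
  assumes xy: "\<And>i j. i \<le> N \<Longrightarrow> j \<le> N \<Longrightarrow> x i \<noteq> y j"
  shows "det (mat (Suc N) (Suc N) (\<lambda>(i, j). 1 / (x i - y j)))
       = det (mat N N (\<lambda>(i, j). 1 / (x i - y j)))
         * (\<Prod>i<N. (x N - x i) * (y i - y N) / ((x i - y N) * (x N - y i))) / (x N - y N)"
proof -
  have row_entry: "1 / (x i - y j) - 1 / (x N - y j) = (x N - x i) / ((x i - y j) * (x N - y j))"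
    if "i \<le> N" "j \<le> N" for i j
    using xy[OF that] xy[OF _ that(2), of N] by (simp add: field_simps)
  have col_entry: "1 / (x i - y j) - 1 / (x i - y N) = (y j - y N) / ((x i - y N) * (x i - y j))"
    if "i \<le> N" "j \<le> N" for i j
    using xy[OF that] xy[OF that(1), of N] by (simp add: field_simps)
  define B where "B i j = (if i < N then 1 / (x i - y j) else 1)" for i j
  define G where "G i j = (if j = N then 1 else if i < N then 1 / (x i - y j) else 0)" for i j
  have "det (mat (Suc N) (Suc N) (\<lambda>(i, j). 1 / (x i - y j)))
      = det (mat (Suc N) (Suc N) (\<lambda>(i, j).
          if i < N then 1 / (x i - y j) + (- 1) * (1 / (x N - y j)) else 1 / (x i - y j)))"
    by (rule det_mat_add_last_row[symmetric])
  also have "\<dots> = det (mat (Suc N) (Suc N) (\<lambda>(i, j).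
      (if i < N then x N - x i else 1) * (1 / (x N - y j)) * B i j))"
    by (intro arg_cong[of _ _ det] eq_matI) (auto simp: B_def row_entry less_Suc_eq)
  also have "\<dots> = (\<Prod>i<N. x N - x i) * (\<Prod>j<Suc N. 1 / (x N - y j))
      * det (mat (Suc N) (Suc N) (\<lambda>(i, j). B i j))"
    by (subst det_mat_scale_rows_cols) (simp add: lessThan_Suc)
  also have "det (mat (Suc N) (Suc N) (\<lambda>(i, j). B i j))
      = det (mat (Suc N) (Suc N) (\<lambda>(i, j). if j < N then B i j + (- 1) * B i N else B i j))"
    by (rule det_mat_add_last_col[symmetric])
  also have "\<dots> = det (mat (Suc N) (Suc N) (\<lambda>(i, j).
      (if i < N then 1 / (x i - y N) else 1) * (if j < N then y j - y N else 1) * G i j))"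
    by (intro arg_cong[of _ _ det] eq_matI) (auto simp: B_def G_def col_entry less_Suc_eq)
  also have "\<dots> = (\<Prod>i<N. 1 / (x i - y N)) * (\<Prod>j<N. y j - y N)
      * det (mat (Suc N) (Suc N) (\<lambda>(i, j). G i j))"
    by (subst det_mat_scale_rows_cols) (simp add: lessThan_Suc)
  also have "det (mat (Suc N) (Suc N) (\<lambda>(i, j). G i j)) = det (mat N N (\<lambda>(i, j). G i j))"
    by (rule det_mat_last_row_unit) (simp_all add: G_def)
  also have "mat N N (\<lambda>(i, j). G i j) = mat N N (\<lambda>(i, j). 1 / (x i - y j))"
    by (intro eq_matI) (simp_all add: G_def)
  finally show ?thesis
    by (simp add: lessThan_Suc prod.distrib prod_dividef mult_ac)
qed

lemma det_scaled_cauchy_Suc: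
  fixes u v x y :: "nat \<Rightarrow> 'a::field"
  assumes "\<And>i j. i \<le> N \<Longrightarrow> j \<le> N \<Longrightarrow> x i \<noteq> y j"
  shows "det (mat (Suc N) (Suc N) (\<lambda>(i, j). u i * v j / (x i - y j)))
       = det (mat N N (\<lambda>(i, j). u i * v j / (x i - y j))) * (u N * v N / (x N - y N))
         * (\<Prod>i<N. (x N - x i) * (y i - y N) / ((x i - y N) * (x N - y i)))"
proof -
  let ?C = "\<lambda>n. mat n n (\<lambda>(i, j). 1 / (x i - y j))"
  let ?P = "\<Prod>i<N. (x N - x i) * (y i - y N) / ((x i - y N) * (x N - y i))"
  have scale: "det (mat n n (\<lambda>(i, j). u i * v j / (x i - y j)))
      = (\<Prod>i<n. u i) * (\<Prod>j<n. v j) * det (?C n)" for n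
    using det_mat_scale_rows_cols[where a = u and b = v and f = "\<lambda>i j. 1 / (x i - y j)"] by simp
  have "det (mat (Suc N) (Suc N) (\<lambda>(i, j). u i * v j / (x i - y j)))
      = (\<Prod>i<Suc N. u i) * (\<Prod>j<Suc N. v j) * (det (?C N) * ?P / (x N - y N))"
    using det_cauchy_Suc[OF assms] by (simp only: scale)
  also have "\<dots> = (\<Prod>i<N. u i) * (\<Prod>j<N. v j) * det (?C N) * (u N * v N / (x N - y N)) * ?P"
    by (simp add: mult_ac)
  finally show ?thesis
    unfolding scale .
qed

lemma prod_neg_one_power_choose_two:
  "(\<Prod>k<n. (- 1 :: 'a::comm_ring_1) ^ (a * k)) = (- 1) ^ (a * (n choose 2))"
proof (induction n)
  case (Suc n)
  have "Suc n choose 2 = (n choose 2) + n"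
    by (simp add: numeral_2_eq_2)
  then show ?case
    using Suc.IH by (simp add: distrib_left power_add)
qed (simp add: numeral_2_eq_2)

lemma fibonomial_0_right [simp]: "fibonomial n 0 = 1"
  by (simp add: fibonomial_def)

text \<open>No hypothesis \<open>k \<le> n\<close> is needed: truncated subtraction keeps every index \<open>n - i + 1\<close> positive.\<close>

lemma fibonomial_pos: "0 < fibonomial n k"
  unfolding fibonomial_def by (intro prod_pos divide_pos_pos) (simp_all add: fib_neq_0_nat)

lemma fibonomial_Suc_Suc:
  "fibonomial (Suc n) (Suc k) = fibonomial n k * real (fib (Suc n)) / real (fib (Suc k))"
proof -
  have "(\<Prod>i = 1..Suc k. real (fib (Suc n - i + 1)))
      = real (fib (Suc n)) * (\<Prod>i = Suc 1..Suc k. real (fib (Suc n - i + 1)))"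
    by (subst prod.atLeast_Suc_atMost) simp_all
  also have "(\<Prod>i = Suc 1..Suc k. real (fib (Suc n - i + 1))) = (\<Prod>i = 1..k. real (fib (n - i + 1)))"
    by (subst prod.atLeast_Suc_atMost_Suc_shift) simp
  finally show ?thesis
    by (simp add: fibonomial_def prod_dividef prod.cl_ivl_Suc)
qed

lemma fibonomial_Suc_right:
  assumes "k < n"
  shows "fibonomial n (Suc k) = fibonomial n k * real (fib (n - k)) / real (fib (Suc k))"
proof -
  have "n - Suc k + 1 = n - k"
    using assms by simp
  then show ?thesis
    by (simp add: fibonomial_def prod.cl_ivl_Suc)
qed

lemma fibonomial_pascal:
  assumes "k < n"
  shows "fibonomial (Suc n) (Suc k)
       = real (fib (Suc (Suc k))) * fibonomial n (Suc k) + real (fib (n - Suc k)) * fibonomial n k"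
proof -
  obtain d where n: "n = Suc k + d"
    using assms less_imp_Suc_add by blast
  have "real (fib (Suc n))
      = real (fib (Suc (Suc k))) * real (fib (n - k)) + real (fib (n - Suc k)) * real (fib (Suc k))"
    using fib_add[of "Suc k" d] unfolding n by (simp add: mult_ac)
  moreover have "real (fib (Suc k)) \<noteq> 0"
    using fib_neq_0_nat[of "Suc k"] by simp
  ultimately show ?thesis
    unfolding fibonomial_Suc_Suc fibonomial_Suc_right[OF assms] by (simp add: field_simps)
qed

lemma fibonomial_Ints: "k \<le> n \<Longrightarrow> fibonomial n k \<in> \<int>"
proof (induction n arbitrary: k)
  case 0
  then show ?case
    by simp
next
  case (Suc n)
  show ?case
  proof (cases k)
    case 0
    then show ?thesis
      by simp
  next
    case k: (Suc k')
    consider "k' = n" | "k' < n"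
      using k Suc.prems by linarith
    then show ?thesis
    proof cases
      case 1
      then show ?thesis
        using Suc.IH[of n] fib_neq_0_nat[of "Suc n"] by (simp add: k fibonomial_Suc_Suc)
    next
      case 2
      then show ?thesis
        using Suc.IH[of k'] Suc.IH[of "Suc k'"] by (simp add: k fibonomial_pascal)
    qed
  qed
qed

lemma fibonomial_eq_prod_lessThan:
  assumes "m \<le> n"
  shows "fibonomial n m = (\<Prod>i<m. real (fib (n + 1 - m + i)) / real (fib (m - i)))"
  unfolding fibonomial_def
proof (rule prod.reindex_bij_witness[of _ "\<lambda>i. m - i" "\<lambda>k. m - k"])
  fix k
  assume "k \<in> {1..m}"
  then have "n + 1 - m + (m - k) = n - k + 1" "m - (m - k) = k"
    using assms by auto
  then show "real (fib (n + 1 - m + (m - k))) / real (fib (m - (m - k)))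
      = real (fib (n - k + 1)) / real (fib k)"
    by simp
qed auto

definition \<phi> :: real where "\<phi> = (1 + sqrt 5) / 2"
definition \<psi> :: real where "\<psi> = (1 - sqrt 5) / 2"

lemma fib_binet: "real (fib n) = (\<phi> ^ n - \<psi> ^ n) / sqrt 5"
  unfolding \<phi>_def \<psi>_def by (rule fib_closed_form)

lemma phi_mult_psi: "\<phi> * \<psi> = -1"
  unfolding \<phi>_def \<psi>_def by (simp add: field_simps)

lemma phi_neq_0 [simp]: "\<phi> \<noteq> 0" and psi_neq_0 [simp]: "\<psi> \<noteq> 0"
  using phi_mult_psi by auto

definition fib_node_x :: "nat \<Rightarrow> nat \<Rightarrow> real" where
  "fib_node_x \<alpha> i = \<phi> ^ (\<alpha> + i) / \<psi> ^ i"

definition fib_node_y :: "nat \<Rightarrow> nat \<Rightarrow> real" where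
  "fib_node_y \<alpha> j = \<psi> ^ (\<alpha> + j) / \<phi> ^ j"

lemma fib_node_x_minus_y:
  "fib_node_x \<alpha> i - fib_node_y \<alpha> j = sqrt 5 * real (fib (\<alpha> + i + j)) / (\<phi> ^ j * \<psi> ^ i)"
proof -
  have "\<phi> ^ (\<alpha> + i + j) - \<psi> ^ (\<alpha> + i + j) = sqrt 5 * real (fib (\<alpha> + i + j))"
    by (simp add: fib_binet)
  then show ?thesis
    by (simp add: fib_node_x_def fib_node_y_def field_simps power_add)
qed

lemma inverse_fib_eq_cauchy:
  "1 / real (fib (\<alpha> + i + j)) = sqrt 5 / \<psi> ^ i * (1 / \<phi> ^ j) / (fib_node_x \<alpha> i - fib_node_y \<alpha> j)"
  by (cases "fib (\<alpha> + i + j) = 0") (simp_all add: fib_node_x_minus_y)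

lemma fib_node_x_diff:
  "fib_node_x \<alpha> (i + d) - fib_node_x \<alpha> i = sqrt 5 * real (fib d) * \<phi> ^ (\<alpha> + i) / \<psi> ^ (i + d)"
proof -
  have "fib_node_x \<alpha> (i + d) - fib_node_x \<alpha> i = \<phi> ^ (\<alpha> + i) * (\<phi> ^ d - \<psi> ^ d) / \<psi> ^ (i + d)"
    by (simp add: fib_node_x_def field_simps power_add)
  also have "\<phi> ^ d - \<psi> ^ d = sqrt 5 * real (fib d)"
    by (simp add: fib_binet)
  finally show ?thesis
    by simp
qed

lemma fib_node_y_diff:
  "fib_node_y \<alpha> i - fib_node_y \<alpha> (i + d) = sqrt 5 * real (fib d) * \<psi> ^ (\<alpha> + i) / \<phi> ^ (i + d)"
proof -
  have "fib_node_y \<alpha> i - fib_node_y \<alpha> (i + d) = \<psi> ^ (\<alpha> + i) * (\<phi> ^ d - \<psi> ^ d) / \<phi> ^ (i + d)"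
    by (simp add: fib_node_y_def field_simps power_add)
  also have "\<phi> ^ d - \<psi> ^ d = sqrt 5 * real (fib d)"
    by (simp add: fib_binet)
  finally show ?thesis
    by simp
qed

lemma fib_cauchy_factor:
  fixes \<alpha> :: nat
  defines "x \<equiv> fib_node_x \<alpha>" and "y \<equiv> fib_node_y \<alpha>"
  assumes "i < m"
  shows "(x m - x i) * (y i - y m) / ((x i - y m) * (x m - y i))
       = (-1) ^ \<alpha> * (real (fib (m - i)) / real (fib (\<alpha> + m + i))) ^ 2"
proof -
  obtain d where m: "m = i + d"
    using assms(3) less_imp_add_positive by blast
  have F: "real (fib (\<alpha> + m + i)) \<noteq> 0"
    using assms(3) fib_neq_0_nat[of "\<alpha> + m + i"] by simp
  have "(x m - x i) * (y i - y m) / ((x i - y m) * (x m - y i))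
      = (\<phi> * \<psi>) ^ (\<alpha> + i) * (\<phi> * \<psi>) ^ i * (real (fib d) / real (fib (\<alpha> + m + i))) ^ 2"
    using F unfolding x_def y_def m fib_node_x_diff fib_node_y_diff fib_node_x_minus_y
    by (simp add: field_simps power_add power_mult_distrib power2_eq_square ac_simps)
  also have "\<dots> = (-1) ^ \<alpha> * (real (fib (m - i)) / real (fib (\<alpha> + m + i))) ^ 2"
    by (simp add: phi_mult_psi m power_add flip: power_mult_distrib)
  finally show ?thesis .
qed

definition fib_hilbert_mat :: "nat \<Rightarrow> nat \<Rightarrow> real mat" where
  "fib_hilbert_mat \<alpha> n = mat n n (\<lambda>(i, j). 1 / real (fib (\<alpha> + i + j)))"

lemma det_fib_hilbert_mat_Suc:
  assumes "0 < \<alpha>"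
  shows "det (fib_hilbert_mat \<alpha> (Suc N)) = det (fib_hilbert_mat \<alpha> N)
           * ((-1) ^ (\<alpha> * N) / (real (fib (\<alpha> + 2 * N)) * fibonomial (\<alpha> + 2 * N - 1) N ^ 2))"
proof -
  let ?x = "fib_node_x \<alpha>" and ?y = "fib_node_y \<alpha>"
  let ?q = "\<lambda>i. real (fib (N - i)) / real (fib (\<alpha> + N + i))"
  have cauchy: "fib_hilbert_mat \<alpha> n
      = mat n n (\<lambda>(i, j). sqrt 5 / \<psi> ^ i * (1 / \<phi> ^ j) / (?x i - ?y j))" for n
    unfolding fib_hilbert_mat_def inverse_fib_eq_cauchy ..
  have distinct: "?x i \<noteq> ?y j" for i j
  proof -
    have "?x i - ?y j \<noteq> 0"
      using assms fib_neq_0_nat[of "\<alpha> + i + j"] by (simp add: fib_node_x_minus_y)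
    then show ?thesis
      by simp
  qed
  have "det (fib_hilbert_mat \<alpha> (Suc N)) = det (fib_hilbert_mat \<alpha> N)
      * (sqrt 5 / \<psi> ^ N * (1 / \<phi> ^ N) / (?x N - ?y N))
      * (\<Prod>i<N. (?x N - ?x i) * (?y i - ?y N) / ((?x i - ?y N) * (?x N - ?y i)))"
    unfolding cauchy by (rule det_scaled_cauchy_Suc) (rule distinct)
  also have "sqrt 5 / \<psi> ^ N * (1 / \<phi> ^ N) / (?x N - ?y N) = 1 / real (fib (\<alpha> + 2 * N))"
    using inverse_fib_eq_cauchy[of \<alpha> N N] by (simp add: mult_2 add.assoc)
  also have "(\<Prod>i<N. (?x N - ?x i) * (?y i - ?y N) / ((?x i - ?y N) * (?x N - ?y i)))
      = (\<Prod>i<N. (-1) ^ \<alpha> * ?q i ^ 2)"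
    by (intro prod.cong) (simp_all add: fib_cauchy_factor)
  also have "\<dots> = (-1) ^ (\<alpha> * N) * (\<Prod>i<N. ?q i) ^ 2"
    by (simp add: prod.distrib power_mult prod_power_distrib)
  also have "(\<Prod>i<N. ?q i) = 1 / fibonomial (\<alpha> + 2 * N - 1) N"
    using assms by (simp add: fibonomial_eq_prod_lessThan prod_dividef ac_simps)
  finally show ?thesis
    by (simp add: power_one_over)
qed

lemma det_fib_hilbert_mat:
  assumes "0 < \<alpha>"
  shows "det (fib_hilbert_mat \<alpha> n)
       = (\<Prod>k<n. (-1) ^ (\<alpha> * k) / (real (fib (\<alpha> + 2 * k)) * fibonomial (\<alpha> + 2 * k - 1) k ^ 2))"
  by (induction n) (simp_all add: fib_hilbert_mat_def[of \<alpha> 0] det_fib_hilbert_mat_Suc[OF assms])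

theorem corollary3p3:
  fixes \<alpha> n :: nat
  assumes "\<alpha> \<ge> 1"
  shows "det (mat (Suc n) (Suc n) (\<lambda>(i, j). 1 / real (fib (\<alpha> + i + j))))
           = 1 / ((-1) ^ (\<alpha> * (Suc n choose 2)) * real (fib \<alpha>)
                  * (\<Prod>k=1..n. real (fib (\<alpha> + 2 * k)) * (fibonomial (\<alpha> + 2 * k - 1) k)^2))
         \<and> (\<exists>m::int. m \<noteq> 0 \<and>
              det (mat (Suc n) (Suc n) (\<lambda>(i, j). 1 / real (fib (\<alpha> + i + j)))) = 1 / of_int m)"
proof -
  define g where "g k = real (fib (\<alpha> + 2 * k)) * fibonomial (\<alpha> + 2 * k - 1) k ^ 2" for k
  define den where "den = (-1) ^ (\<alpha> * (Suc n choose 2)) * real (fib \<alpha>) * (\<Prod>k=1..n. g k)"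
  have "det (mat (Suc n) (Suc n) (\<lambda>(i, j). 1 / real (fib (\<alpha> + i + j))))
      = (\<Prod>k<Suc n. (-1) ^ (\<alpha> * k)) / (\<Prod>k<Suc n. g k)"
    using assms det_fib_hilbert_mat[of \<alpha> "Suc n"] by (simp add: fib_hilbert_mat_def g_def prod_dividef)
  also have "(\<Prod>k<Suc n. g k) = real (fib \<alpha>) * (\<Prod>k=1..n. g k)"
    by (simp add: prod.lessThan_Suc_shift prod.atLeast1_atMost_eq g_def[of 0] del: prod.lessThan_Suc)
  also have "(\<Prod>k<Suc n. (-1) ^ (\<alpha> * k)) / (real (fib \<alpha>) * (\<Prod>k=1..n. g k)) = 1 / den"
    by (cases "even (\<alpha> * (Suc n choose 2))") (simp_all add: den_def prod_neg_one_power_choose_two)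
  finally have closed_form: "det (mat (Suc n) (Suc n) (\<lambda>(i, j). 1 / real (fib (\<alpha> + i + j)))) = 1 / den" .
  have "den \<in> \<int>"
    using assms by (auto simp: den_def g_def intro!: Ints_mult Ints_power Ints_prod fibonomial_Ints)
  then obtain m where m: "den = of_int m"
    by (elim Ints_cases)
  moreover have "den \<noteq> 0"
    using assms by (simp add: den_def g_def fib_neq_0_nat fibonomial_pos[THEN less_imp_neq, THEN not_sym])
  ultimately have "m \<noteq> 0"
    by simp
  then show ?thesis
    using closed_form m unfolding den_def g_def by auto
qed

end
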